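(* Let $\delta>0$, let $f \in C((0,\infty);(0,\infty))$ be asymptotically increasing with $\lim_{x\to\infty} f(x)/x = \infty$, let $w \in C([0,\infty);[0,\infty))$ with $w(0)>0$, and let $\psi \in C([-\delta,0];(0,\infty))$. If \[ \int_\eta^\infty \frac{du}{\sqrt{\int_0^u f(s)\,ds}} < \infty \quad \text{for some } \eta>0, \] then solutions of \[ y'(t) = \int_{t-\delta}^t w(t-s) f(y(s))\,ds, \quad t \ge 0; \qquad y(t)=\psi(t), \quad t\in[-\delta,0], \] blow up in finite time.
   Context: "$f$ is asymptotically increasing" means that there is a continuous increasing function $\phi:(0,\infty)\to(0,\infty)$ with $f(x)/\phi(x)\to 1$ as $x\to\infty$. A solution blows up in finite time if there is $T\in(0,\infty)$ with $y$ continuous on $[-\delta,T)$ and $\lim_{t\to T^-}|y(t)|=\infty$. *)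

theory Defs
  imports "HOL-Analysis.Analysis"
begin

definition asymp_increasing :: "(real \<Rightarrow> real) \<Rightarrow> bool" where
  "asymp_increasing f \<longleftrightarrow>
     (\<exists>\<phi>::real \<Rightarrow> real. continuous_on {0<..} \<phi> \<and> strict_mono_on {0<..} \<phi> \<and>
        (\<forall>x>0. \<phi> x > 0) \<and> ((\<lambda>x. f x / \<phi> x) \<longlongrightarrow> 1) at_top)"

text \<open>y is a solution of y'(t) = int_{t-delta}^t w(t-s) f(y(s)) ds (t >= 0),
  y = psi on [-delta,0], on the interval [-delta, T) (T may be infinity).
  Since f is only defined on (0,inf), a solution must take values in (0,inf).
  At t = 0 the derivative is one-sided (within [0,T)).\<close>
definition is_solution ::
  "real \<Rightarrow> (real \<Rightarrow> real) \<Rightarrow> (real \<Rightarrow> real) \<Rightarrow> (real \<Rightarrow> real) \<Rightarrow> ereal \<Rightarrow> (real \<Rightarrow> real) \<Rightarrow> bool"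
  where
  "is_solution \<delta> w f \<psi> T y \<longleftrightarrow>
     0 < T \<and>
     continuous_on {t. -\<delta> \<le> t \<and> ereal t < T} y \<and>
     (\<forall>t\<in>{-\<delta>..0}. y t = \<psi> t) \<and>
     (\<forall>t. -\<delta> \<le> t \<and> ereal t < T \<longrightarrow> 0 < y t) \<and>
     (\<forall>t. 0 \<le> t \<and> ereal t < T \<longrightarrow>
        (y has_real_derivative integral {t-\<delta>..t} (\<lambda>s. w (t - s) * f (y s)))
          (at t within {t. 0 \<le> t \<and> ereal t < T}))"

definition is_maximal_solution ::
  "real \<Rightarrow> (real \<Rightarrow> real) \<Rightarrow> (real \<Rightarrow> real) \<Rightarrow> (real \<Rightarrow> real) \<Rightarrow> ereal \<Rightarrow> (real \<Rightarrow> real) \<Rightarrow> bool"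
  where
  "is_maximal_solution \<delta> w f \<psi> T y \<longleftrightarrow>
     is_solution \<delta> w f \<psi> T y \<and>
     \<not> (\<exists>T' z. T < T' \<and> is_solution \<delta> w f \<psi> T' z \<and>
              (\<forall>t. -\<delta> \<le> t \<and> ereal t < T \<longrightarrow> z t = y t))"

end

theory Submission
  imports Defs "HOL-Complex_Analysis.Great_Picard"
begin

(* Solutions are increasing. If one existed for all time, then, with w >= c > 0 near 0 and f
   comparable to an increasing function, it would pass from M to 2 M within time
   O(M / sqrt F(M)), F the primitive of f (here f(x)/x -> infinity gives F(M) <= 5 M f(M));
   summed over M = 2^n M0 these times are bounded by the Osgood-type integral of 1 / sqrt F,
   so y would be unbounded on a bounded interval. If the maximal time T is finite and y stays
   bounded, y has a limit at T and Tonelli's lagged approximations together with Arzela-Ascoli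
   continue it beyond T, contradicting maximality. *)

lemma ereal_le_less_trans_real: "(s::real) \<le> t \<Longrightarrow> ereal t < T \<Longrightarrow> ereal s < T"
  by (metis ereal_less_eq(3) le_less_trans)

lemma ereal_less_le_trans_real: "(t::real) < b \<Longrightarrow> ereal b \<le> T \<Longrightarrow> ereal t < T"
  using less_le_trans[of "ereal t" "ereal b" T] by simp

lemma ereal_less_obtain_real:
  assumes "ereal t < T"
  obtains b where "t < b" "ereal b \<le> T"
proof (cases T)
  case (real r)
  then show ?thesis using assms that by auto
next
  case PInf
  then show ?thesis using that[of "t + 1"] by auto
qed (use assms in auto)

lemma integral_Icc_pos:
  fixes f :: "real \<Rightarrow> real"
  assumes fc: "continuous_on {0<..} f" and fp: "\<And>x. x > 0 \<Longrightarrow> f x > 0"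
    and u: "u > 0" and fi: "f integrable_on {0..u}"
  shows "integral {0..u} f > 0"
proof -
  let ?g = "\<lambda>x. if x = 0 then 0 else f x"
  have "f integrable_on {0..u/2}" by (rule integrable_on_subinterval[OF fi]) (use u in auto)
  then have "?g integrable_on {0..u/2}" by (rule integrable_spike[of _ _ "{0}"]) auto
  then have "0 \<le> integral {0..u/2} ?g" by (rule integral_nonneg) (simp add: fp less_imp_le)
  also have "integral {0..u/2} ?g = integral {0..u/2} f" by (rule integral_spike[of "{0}"]) auto
  finally have left: "0 \<le> integral {0..u/2} f" .
  have "continuous_on {u/2..u} f" by (rule continuous_on_subset[OF fc]) (use u in auto)
  then obtain x0 where x0: "x0 \<in> {u/2..u}" "\<And>x. x \<in> {u/2..u} \<Longrightarrow> f x0 \<le> f x"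
    using continuous_attains_inf[of "{u/2..u}" f] u by auto
  have "0 < (u/2) * f x0" using x0(1) u fp[of x0] by auto
  also have "\<dots> = integral {u/2..u} (\<lambda>_. f x0)" using u by simp
  also have "\<dots> \<le> integral {u/2..u} f"
    by (rule integral_le[OF _ integrable_on_subinterval[OF fi]]) (use u x0(2) in auto)
  finally have right: "0 < integral {u/2..u} f" .
  have "integral {0..u/2} f + integral {u/2..u} f = integral {0..u} f"
    by (rule Henstock_Kurzweil_Integration.integral_combine[OF _ _ fi]) (use u in auto)
  then show ?thesis using left right by linarith
qed

lemma integral_Icc_mono_upper:
  fixes f :: "real \<Rightarrow> real"
  assumes "\<And>x. x > 0 \<Longrightarrow> f x > 0" and fi: "f integrable_on {0..v}" and "0 < u" "u \<le> v"
  shows "integral {0..u} f \<le> integral {0..v} f"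
proof -
  have "integral {0..u} f + integral {u..v} f = integral {0..v} f"
    by (rule Henstock_Kurzweil_Integration.integral_combine[OF _ _ fi]) (use assms in auto)
  moreover have "0 \<le> integral {u..v} f"
    by (rule integral_nonneg[OF integrable_on_subinterval[OF fi]])
       (use assms in \<open>auto intro: less_imp_le\<close>)
  ultimately show ?thesis by linarith
qed

lemma integral_reflect_shift_real:
  fixes \<phi> :: "real \<Rightarrow> real"
  shows "integral {t-d..t} (\<lambda>s. \<phi> (t - s)) = integral {0..d} \<phi>"
proof -
  have "integral {-d+t..0+t} (\<lambda>s. \<phi> (t - s)) = integral {-d..0} ((\<lambda>s. \<phi> (t - s)) \<circ> (+) t)"
    by (rule integral_shift_Icc_real[symmetric])
  also have "\<dots> = integral {-d..-0} (\<lambda>x. \<phi> (- x))" by (simp add: o_def)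
  also have "\<dots> = integral {0..d} \<phi>" by (rule Henstock_Kurzweil_Integration.integral_reflect_real)
  finally show ?thesis by simp
qed

lemma abs_integral_diff_le:
  fixes p q :: "real \<Rightarrow> real"
  assumes "p integrable_on {\<alpha>..\<beta>}" "q integrable_on {\<alpha>..\<beta>}" "\<alpha> \<le> \<beta>"
    and "\<And>x. x \<in> {\<alpha>..\<beta>} \<Longrightarrow> \<bar>p x - q x\<bar> \<le> c"
  shows "\<bar>integral {\<alpha>..\<beta>} p - integral {\<alpha>..\<beta>} q\<bar> \<le> c * (\<beta> - \<alpha>)"
proof -
  have pq: "(\<lambda>x. p x - q x) integrable_on {\<alpha>..\<beta>}" by (intro integrable_diff assms)
  have "integral {\<alpha>..\<beta>} p - integral {\<alpha>..\<beta>} q = integral {\<alpha>..\<beta>} (\<lambda>x. p x - q x)"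
    by (rule Henstock_Kurzweil_Integration.integral_diff[symmetric]) (intro assms)+
  moreover have "integral {\<alpha>..\<beta>} (\<lambda>x. p x - q x) \<le> integral {\<alpha>..\<beta>} (\<lambda>_. c)"
    by (rule integral_le[OF pq]) (use assms(4) in \<open>force+\<close>)
  moreover have "integral {\<alpha>..\<beta>} (\<lambda>_. - c) \<le> integral {\<alpha>..\<beta>} (\<lambda>x. p x - q x)"
    by (rule integral_le[OF _ pq]) (use assms(4) in \<open>force+\<close>)
  ultimately show ?thesis using assms(3) by (simp add: abs_le_iff algebra_simps)
qed

lemma eq_0_if_abs_le_mult_eps:
  fixes D C :: real
  assumes "0 \<le> C" "\<And>e. 0 < e \<Longrightarrow> \<bar>D\<bar> \<le> C * e"
  shows "D = 0"
proof -
  have "\<bar>D\<bar> \<le> 0 + e" if "0 < e" for e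
  proof -
    have "\<bar>D\<bar> \<le> C * (e / (C + 1))" using assms(1) that by (intro assms(2)) simp
    also have "\<dots> \<le> e" using assms(1) that by (simp add: field_simps)
    finally show ?thesis by simp
  qed
  then show ?thesis using field_le_epsilon[of "\<bar>D\<bar>" 0] by simp
qed

lemma mono_tendsto_SUP_at_left:
  fixes y :: "real \<Rightarrow> real"
  assumes "0 < a" and mono: "\<And>s t. 0 \<le> s \<Longrightarrow> s \<le> t \<Longrightarrow> t < a \<Longrightarrow> y s \<le> y t"
    and bdd: "bdd_above (y ` {0..<a})"
  shows "(y \<longlongrightarrow> (SUP t\<in>{0..<a}. y t)) (at_left a)"
  unfolding tendsto_iff
proof (intro allI impI)
  let ?L = "SUP t\<in>{0..<a}. y t"
  fix e :: real assume "0 < e"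
  then obtain t0 where t0: "t0 \<in> {0..<a}" "?L - e < y t0"
    using less_cSUP_iff[OF _ bdd, of "?L - e"] assms(1) by auto
  have "eventually (\<lambda>x. x \<in> {t0<..<a}) (at_left a)" using t0 by (intro eventually_at_left_real) auto
  then show "eventually (\<lambda>x. dist (y x) ?L < e) (at_left a)"
  proof (rule eventually_mono)
    fix x assume x: "x \<in> {t0<..<a}"
    have "y t0 \<le> y x" using mono[of t0 x] x t0 by auto
    moreover have "y x \<le> ?L" using x t0 by (intro cSUP_upper[OF _ bdd]) auto
    ultimately show "dist (y x) ?L < e" using t0 by (simp add: dist_real_def)
  qed
qed

lemma continuous_on_pos_near_0:
  fixes w :: "real \<Rightarrow> real"
  assumes "continuous_on {0..} w" "w 0 > 0" "\<delta> > 0"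
  obtains d c where "0 < d" "d \<le> \<delta>" "0 < c" "\<forall>r\<in>{0..d}. c \<le> w r"
proof -
  have "continuous (at 0 within {0..}) w"
    using assms(1) by (simp add: continuous_on_eq_continuous_within)
  then obtain d where d: "d > 0" "\<forall>x\<in>{0..}. dist x 0 < d \<longrightarrow> dist (w x) (w 0) < w 0 / 2"
    unfolding continuous_within_eps_delta using assms(2) by (meson half_gt_zero)
  have "w 0 / 2 \<le> w r" if "r \<in> {0..min \<delta> (d/2)}" for r
  proof -
    have "dist (w r) (w 0) < w 0 / 2" using d that by (auto simp: dist_real_def)
    then show ?thesis by (auto simp: dist_real_def abs_if split: if_splits)
  qed
  then show ?thesis using that[of "min \<delta> (d/2)" "w 0 / 2"] d assms by auto
qed

lemma continuous_on_convolution_Icc: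
  fixes w \<phi> :: "real \<Rightarrow> real"
  assumes "continuous_on {0..\<delta>} w" "continuous_on {p-\<delta>..q} \<phi>"
  shows "continuous_on {p..q} (\<lambda>\<tau>. integral {0..\<delta>} (\<lambda>r. w r * \<phi> (\<tau> - r)))"
proof -
  have "continuous_on ({p..q} \<times> cbox 0 \<delta>) (\<lambda>z. w (snd z))"
    by (rule continuous_on_compose2[OF assms(1)]) (auto intro!: continuous_intros simp: cbox_interval)
  moreover have "continuous_on ({p..q} \<times> cbox 0 \<delta>) (\<lambda>z. \<phi> (fst z - snd z))"
    by (rule continuous_on_compose2[OF assms(2)]) (auto intro!: continuous_intros simp: cbox_interval)
  ultimately have "continuous_on ({p..q} \<times> cbox 0 \<delta>) (\<lambda>(x, r). w r * \<phi> (x - r))"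
    using continuous_on_mult by (fastforce simp: case_prod_beta)
  from integral_continuous_on_param[OF this] show ?thesis unfolding cbox_interval by simp
qed

lemma asymp_increasing_quasi_mono:
  assumes "asymp_increasing f"
  obtains M1 where "M1 > 0" "\<And>x x'. M1 \<le> x \<Longrightarrow> x \<le> x' \<Longrightarrow> f x \<le> 4 * f x'"
proof -
  from assms obtain \<phi> where \<phi>: "strict_mono_on {0<..} \<phi>" "\<forall>x>0. \<phi> x > 0"
      "((\<lambda>x. f x / \<phi> x) \<longlongrightarrow> 1) at_top"
    unfolding asymp_increasing_def by blast
  have "eventually (\<lambda>x. 1/2 < f x / \<phi> x \<and> f x / \<phi> x < 2) at_top"
    using order_tendstoD[OF \<phi>(3), of "1/2"] order_tendstoD[OF \<phi>(3), of 2] by (simp add: eventually_conj)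
  then obtain N where N: "\<And>x. x \<ge> N \<Longrightarrow> 1/2 < f x / \<phi> x \<and> f x / \<phi> x < 2"
    unfolding eventually_at_top_linorder by blast
  have comparable: "\<phi> x / 2 \<le> f x \<and> f x \<le> 2 * \<phi> x" if "x \<ge> max N 1" for x
    using N[of x] \<phi>(2) that by (auto simp: field_simps)
  show ?thesis
  proof (rule that[of "max N 1"])
    fix x x' assume x: "max N 1 \<le> x" "x \<le> x'"
    have "\<phi> x \<le> \<phi> x'" by (rule strict_mono_on_leD[OF \<phi>(1)]) (use x in auto)
    then show "f x \<le> 4 * f x'" using comparable[of x] comparable[of x'] x by auto
  qed simp
qed

lemma eventually_integral_le_5_mult:
  fixes f :: "real \<Rightarrow> real"
  assumes fpos: "\<And>x. x > 0 \<Longrightarrow> f x > 0"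
    and qm: "\<And>x x'. M1 \<le> x \<Longrightarrow> x \<le> x' \<Longrightarrow> f x \<le> 4 * f x'"
    and sup: "filterlim (\<lambda>x. f x / x) at_top at_top"
    and "\<eta> > 0" and fint: "\<And>u. u \<ge> \<eta> \<Longrightarrow> f integrable_on {0..u}"
  shows "eventually (\<lambda>M. integral {0..M} f \<le> 5 * M * f M) at_top"
proof -
  define A where "A = max \<eta> M1"
  have A: "A \<ge> \<eta>" "A \<ge> M1" "A > 0" using \<open>\<eta> > 0\<close> by (auto simp: A_def)
  have tail: "integral {0..M} f \<le> integral {0..A} f + 4 * M * f M" if M: "M \<ge> A" for M
  proof -
    have fiM: "f integrable_on {0..M}" using fint M A by auto
    have "integral {0..A} f + integral {A..M} f = integral {0..M} f"
      by (rule Henstock_Kurzweil_Integration.integral_combine[OF _ M fiM]) (use A in auto)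
    moreover have "integral {A..M} f \<le> integral {A..M} (\<lambda>_. 4 * f M)"
      by (rule integral_le[OF integrable_on_subinterval[OF fiM]]) (use A qm in auto)
    moreover have "integral {A..M} (\<lambda>_. 4 * f M) \<le> 4 * M * f M"
      using M A fpos[of M] by (simp add: algebra_simps)
    ultimately show ?thesis by linarith
  qed
  have "eventually (\<lambda>M. \<bar>integral {0..A} f\<bar> \<le> f M / M) at_top"
    using sup unfolding filterlim_at_top by blast
  moreover have "eventually (\<lambda>M. M \<ge> max A 1) at_top" by (rule eventually_ge_at_top)
  ultimately show ?thesis
  proof eventually_elim
    case (elim M)
    have "1 \<le> M * M" using elim mult_mono[of 1 M 1 M] by simp
    then have "f M / M \<le> M * f M" using elim fpos[of M] A by (simp add: field_simps)
    then show ?case using elim tail[of M] by linarith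
  qed
qed

lemma integral_inv_sqrt_primitive_lower:
  fixes f :: "real \<Rightarrow> real"
  assumes fcont: "continuous_on {0<..} f" and fpos: "\<And>x. x > 0 \<Longrightarrow> f x > 0"
    and fint: "\<And>u. u \<ge> \<eta> \<Longrightarrow> f integrable_on {0..u}"
    and hint: "(\<lambda>u. 1 / sqrt (integral {0..u} f)) integrable_on {\<eta>..}"
    and "\<eta> > 0" "M/2 \<ge> \<eta>"
  shows "M/2 * (1 / sqrt (integral {0..M} f)) \<le> integral {M/2..M} (\<lambda>u. 1 / sqrt (integral {0..u} f))"
proof -
  let ?F = "\<lambda>u. integral {0..u} f"
  have "integral {M/2..M} (\<lambda>_. 1 / sqrt (?F M)) \<le> integral {M/2..M} (\<lambda>u. 1 / sqrt (?F u))"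
  proof (rule integral_le)
    show "(\<lambda>u. 1 / sqrt (?F u)) integrable_on {M/2..M}"
      by (rule integrable_on_subinterval[OF hint]) (use assms in auto)
    fix u assume u: "u \<in> {M/2..M}"
    have "0 < ?F u" by (rule integral_Icc_pos[OF fcont fpos]) (use u assms in auto)
    moreover have "?F u \<le> ?F M" by (rule integral_Icc_mono_upper[OF fpos]) (use u assms in auto)
    ultimately show "1 / sqrt (?F M) \<le> 1 / sqrt (?F u)" by (simp add: frac_le)
  qed (rule integrable_continuous_interval, rule continuous_on_const)
  then show ?thesis using assms by simp
qed

text \<open>If \<open>w \<ge> c\<close> near 0 and \<open>f \<ge> f M / 4\<close> along the solution, the time
  \<open>sqrt (8 * M / (c * f M))\<close> suffices for the solution to increase by \<open>M\<close>; summed over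
  \<open>M = 2^n * M0\<close> these times are controlled by the Osgood-type integral.\<close>
lemma eventually_growth_time_le:
  fixes f :: "real \<Rightarrow> real"
  assumes fcont: "continuous_on {0<..} f" and fpos: "\<And>x. x > 0 \<Longrightarrow> f x > 0"
    and qm: "\<And>x x'. M1 \<le> x \<Longrightarrow> x \<le> x' \<Longrightarrow> f x \<le> 4 * f x'"
    and sup: "filterlim (\<lambda>x. f x / x) at_top at_top"
    and "\<eta> > 0" and fint: "\<And>u. u \<ge> \<eta> \<Longrightarrow> f integrable_on {0..u}"
    and hint: "(\<lambda>u. 1 / sqrt (integral {0..u} f)) integrable_on {\<eta>..}"
    and "c > 0" "d > 0"
  shows "eventually (\<lambda>M. sqrt (8 * M / (c * f M)) \<le> d \<and>
           sqrt (8 * M / (c * f M)) \<le>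
             2 * sqrt (40 / c) * integral {M/2..M} (\<lambda>u. 1 / sqrt (integral {0..u} f))) at_top"
proof -
  let ?F = "\<lambda>u. integral {0..u} f" and ?h = "\<lambda>u. 1 / sqrt (integral {0..u} f)"
  have "eventually (\<lambda>M. M \<ge> 2 * max \<eta> M1) at_top" by (rule eventually_ge_at_top)
  moreover have "eventually (\<lambda>M. ?F M \<le> 5 * M * f M) at_top"
    by (rule eventually_integral_le_5_mult[OF fpos qm sup \<open>\<eta> > 0\<close> fint])
  moreover have "eventually (\<lambda>M. 8 / (c * d\<^sup>2) \<le> f M / M) at_top"
    using sup unfolding filterlim_at_top by blast
  ultimately show ?thesis
  proof eventually_elim
    case (elim M)
    have M: "M > 0" "M/2 \<ge> \<eta>" using elim \<open>\<eta> > 0\<close> by auto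
    have fM: "f M > 0" using fpos M by simp
    have FM: "0 < ?F M" by (rule integral_Icc_pos[OF fcont fpos]) (use M fint in auto)
    have "8 * M / (c * f M) \<le> d\<^sup>2"
      using elim(3) M fM \<open>c > 0\<close> \<open>d > 0\<close> by (simp add: field_simps)
    then have "sqrt (8 * M / (c * f M)) \<le> d"
      using real_sqrt_le_mono[of _ "d\<^sup>2"] \<open>d > 0\<close> by fastforce
    moreover have "8 * M / (c * f M) \<le> (40 / c) * M\<^sup>2 / ?F M"
    proof -
      have "8 * M * ?F M \<le> 8 * M * (5 * M * f M)" using elim(2) M by (intro mult_left_mono) auto
      then show ?thesis using fM FM \<open>c > 0\<close> by (simp add: field_simps power2_eq_square)
    qed
    then have "sqrt (8 * M / (c * f M)) \<le> 2 * sqrt (40 / c) * (M/2 * (1 / sqrt (?F M)))"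
      using real_sqrt_le_mono M by (fastforce simp: real_sqrt_mult real_sqrt_divide)
    moreover have "2 * sqrt (40 / c) * (M/2 * (1 / sqrt (?F M))) \<le> 2 * sqrt (40 / c) * integral {M/2..M} ?h"
      using integral_inv_sqrt_primitive_lower[OF fcont fpos fint hint \<open>\<eta> > 0\<close> M(2)] \<open>c > 0\<close>
      by (intro mult_left_mono) auto
    ultimately show ?case by linarith
  qed
qed

lemma continuous_on_extend_at_left:
  fixes y :: "real \<Rightarrow> real"
  assumes "continuous_on {c..<a} y" "(y \<longlongrightarrow> L) (at_left a)" "c < a"
  shows "continuous_on {c..a} (\<lambda>t. if t < a then y t else L)"
  unfolding continuous_on_eq_continuous_within
proof
  let ?z = "\<lambda>t. if t < a then y t else L"
  fix x assume x: "x \<in> {c..a}"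
  show "continuous (at x within {c..a}) ?z"
  proof (cases "x < a")
    case True
    have "at x within {c..a} = at x within {c..<a}"
      by (rule at_within_nhd[of x "{..<a}"]) (use True in auto)
    then have "continuous (at x within {c..a}) y"
      using assms(1) x True by (simp add: continuous_on_eq_continuous_within)
    then show ?thesis
    proof (rule continuous_transform_within)
      show "0 < a - x" "x \<in> {c..a}" using True x by auto
      show "\<And>x'. x' \<in> {c..a} \<Longrightarrow> dist x' x < a - x \<Longrightarrow> y x' = ?z x'"
        by (auto simp: dist_real_def)
    qed
  next
    case False
    then have "x = a" using x by auto
    have ev: "eventually (\<lambda>t. y t = ?z t) (at_left a)"
      using eventually_at_left_real[OF \<open>c < a\<close>] by (rule eventually_mono) auto
    have "(?z \<longlongrightarrow> L) (at_left a)" using assms(2) tendsto_cong[OF ev] by simp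
    moreover have "at a within {c..a} = at_left a" by (rule at_within_Icc_at_left) (use assms in auto)
    ultimately show ?thesis unfolding \<open>x = a\<close> continuous_within by simp
  qed
qed

lemma clamp_uniformly_continuous:
  fixes f :: "real \<Rightarrow> real"
  assumes "continuous_on {m..U} f" "m \<le> U" "0 < e"
  shows "\<exists>d>0. \<forall>x x'. \<bar>x - x'\<bar> < d \<longrightarrow> \<bar>f (min (max x m) U) - f (min (max x' m) U)\<bar> < e"
proof -
  have "uniformly_continuous_on {m..U} f" by (rule compact_uniformly_continuous[OF assms(1) compact_Icc])
  then obtain d where "d > 0" and d: "\<forall>x\<in>{m..U}. \<forall>x'\<in>{m..U}. dist x' x < d \<longrightarrow> dist (f x') (f x) < e"
    unfolding uniformly_continuous_on_def using assms(3) by blast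
  have "\<bar>min (max x m) U - min (max x' m) U\<bar> \<le> \<bar>x - x'\<bar>" for x x' :: real
    using assms(2) by (auto simp: min_def max_def abs_if)
  then have "\<bar>f (min (max x m) U) - f (min (max x' m) U)\<bar> < e" if "\<bar>x - x'\<bar> < d" for x x'
    using d that assms(2) by (fastforce simp: dist_real_def)
  then show ?thesis using \<open>d > 0\<close> by blast
qed

lemma integral_equation_continue:
  fixes y g P :: "real \<Rightarrow> real"
  assumes P: "continuous_on {0..b} P" and "0 < a" "a \<le> b"
    and y: "\<And>t. 0 \<le> t \<Longrightarrow> t < a \<Longrightarrow> y t = y0 + integral {0..t} P"
    and y_lim: "(y \<longlongrightarrow> L) (at_left a)"
    and g: "\<And>t. t \<in> {a..b} \<Longrightarrow> g t = L + integral {a..t} P"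
    and t: "t \<in> {a..b}"
  shows "g t = y0 + integral {0..t} P"
proof -
  let ?q = "\<lambda>t. y0 + integral {0..t} P"
  have P_int: "P integrable_on {0..t}"
    by (rule integrable_continuous_interval, rule continuous_on_subset[OF P]) (use t in auto)
  have "continuous_on {0..a} ?q"
    using continuous_on_subset[OF P, of "{0..a}"] \<open>a \<le> b\<close>
    by (intro continuous_intros indefinite_integral_continuous_1 integrable_continuous_interval) auto
  then have "(?q \<longlongrightarrow> ?q a) (at a within {0..a})" using \<open>0 < a\<close> unfolding continuous_on_def by auto
  moreover have "at a within {0..a} = at_left a" by (rule at_within_Icc_at_left) (use \<open>0 < a\<close> in auto)
  moreover have ev: "eventually (\<lambda>t. y t = ?q t) (at_left a)"
    using eventually_at_left_real[OF \<open>0 < a\<close>] by (rule eventually_mono) (auto intro: y)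
  then have "(?q \<longlongrightarrow> L) (at_left a)" using y_lim tendsto_cong[OF ev] by simp
  ultimately have "?q a = L" using tendsto_unique[OF trivial_limit_at_left_real] by simp
  moreover have "integral {0..a} P + integral {a..t} P = integral {0..t} P"
    by (rule Henstock_Kurzweil_Integration.integral_combine[OF _ _ P_int]) (use t \<open>0 < a\<close> in auto)
  ultimately show ?thesis using g[OF t] by linarith
qed

lemma is_solution_of_integral_equation:
  fixes Z P :: "real \<Rightarrow> real"
  assumes "0 < b" and Z_cont: "continuous_on {-\<delta>..b} Z"
    and "\<And>t. t \<in> {-\<delta>..0} \<Longrightarrow> Z t = \<psi> t" and "\<And>t. t \<in> {-\<delta>..b} \<Longrightarrow> 0 < Z t"
    and P_cont: "continuous_on {0..b} P"
    and P: "\<And>t. t \<in> {0..b} \<Longrightarrow> integral {t-\<delta>..t} (\<lambda>s. w (t - s) * f (Z s)) = P t"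
    and Z_eq: "\<And>t. t \<in> {0..b} \<Longrightarrow> Z t = Z 0 + integral {0..t} P"
  shows "is_solution \<delta> w f \<psi> (ereal b) Z"
  unfolding is_solution_def
proof (intro conjI allI impI ballI)
  show "0 < ereal b" using \<open>0 < b\<close> by simp
  show "continuous_on {t. -\<delta> \<le> t \<and> ereal t < ereal b} Z"
    by (rule continuous_on_subset[OF Z_cont]) auto
  fix t
  show "t \<in> {-\<delta>..0} \<Longrightarrow> Z t = \<psi> t" by (rule assms(3))
  show "-\<delta> \<le> t \<and> ereal t < ereal b \<Longrightarrow> 0 < Z t" by (rule assms(4)) auto
  assume t: "0 \<le> t \<and> ereal t < ereal b"
  have "((\<lambda>x. Z 0 + integral {0..x} P) has_real_derivative P t) (at t within {0..b})"
    using integral_has_real_derivative[OF P_cont, of t] t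
    by (auto intro!: derivative_eq_intros)
  then have "((\<lambda>x. Z 0 + integral {0..x} P) has_real_derivative P t) (at t within {0..<b})"
    by (rule DERIV_subset) auto
  then have Z_deriv: "(Z has_real_derivative P t) (at t within {0..<b})"
  proof (rule has_field_derivative_transform_within[OF _ zero_less_one])
    show "t \<in> {0..<b}" using t by simp
    fix x assume "x \<in> {0..<b}"
    then have "x \<in> {0..b}" by simp
    from Z_eq[OF this] show "Z 0 + integral {0..x} P = Z x" by (rule sym)
  qed
  have dom: "{t. 0 \<le> t \<and> ereal t < ereal b} = {0..<b}" by auto
  have P_t: "integral {t-\<delta>..t} (\<lambda>s. w (t - s) * f (Z s)) = P t" by (rule P) (use t in simp)
  show "(Z has_real_derivative integral {t-\<delta>..t} (\<lambda>s. w (t - s) * f (Z s)))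
      (at t within {t. 0 \<le> t \<and> ereal t < ereal b})"
    unfolding dom P_t by (rule Z_deriv)
qed

lemma continuous_on_delay_integral:
  fixes w \<phi> :: "real \<Rightarrow> real"
  assumes "continuous_on {0..\<delta>} w" "continuous_on {p-\<delta>..q} \<phi>"
  shows "continuous_on {p..q} (\<lambda>\<tau>. integral {\<tau>-\<delta>..\<tau>} (\<lambda>s. w (\<tau> - s) * \<phi> s))"
proof -
  have "integral {\<tau>-\<delta>..\<tau>} (\<lambda>s. w (\<tau> - s) * \<phi> s) = integral {0..\<delta>} (\<lambda>r. w r * \<phi> (\<tau> - r))" for \<tau>
    using integral_reflect_shift_real[where \<phi> = "\<lambda>r. w r * \<phi> (\<tau> - r)" and t = \<tau>] by simp
  then show ?thesis using continuous_on_convolution_Icc[OF assms] by simp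
qed

section \<open>Solutions of the delay equation\<close>

locale delay_solution =
  fixes \<delta> :: real and w f \<psi> y :: "real \<Rightarrow> real" and T :: ereal
  assumes delta_pos: "\<delta> > 0"
    and f_cont: "continuous_on {0<..} f" and f_pos: "\<And>x. x > 0 \<Longrightarrow> f x > 0"
    and w_cont: "continuous_on {0..} w" and w_nonneg: "\<And>x. x \<ge> 0 \<Longrightarrow> w x \<ge> 0"
    and solution: "is_solution \<delta> w f \<psi> T y"
begin

abbreviation memory :: "real \<Rightarrow> real" where
  "memory t \<equiv> integral {t-\<delta>..t} (\<lambda>s. w (t - s) * f (y s))"

lemma T_pos: "0 < T"
  and y_cont: "continuous_on {t. -\<delta> \<le> t \<and> ereal t < T} y"
  and y_initial: "t \<in> {-\<delta>..0} \<Longrightarrow> y t = \<psi> t"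
  and y_pos: "-\<delta> \<le> t \<Longrightarrow> ereal t < T \<Longrightarrow> 0 < y t"
  and y_deriv: "0 \<le> t \<Longrightarrow> ereal t < T \<Longrightarrow>
     (y has_real_derivative memory t) (at t within {t. 0 \<le> t \<and> ereal t < T})"
  using solution unfolding is_solution_def by auto

lemma y_cont_Icc: "-\<delta> \<le> s \<Longrightarrow> ereal t < T \<Longrightarrow> continuous_on {s..t} y"
  by (rule continuous_on_subset[OF y_cont]) (auto intro: ereal_le_less_trans_real)

lemma memory_integrand_cont:
  assumes "0 \<le> t" "ereal t < T" "t - \<delta> \<le> a" "b \<le> t"
  shows "continuous_on {a..b} (\<lambda>s. w (t - s) * f (y s))"
proof (intro continuous_intros)
  show "continuous_on {a..b} (\<lambda>s. w (t - s))"
    by (rule continuous_on_compose2[OF w_cont]) (use assms in \<open>auto intro!: continuous_intros\<close>)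
  have "-\<delta> \<le> a" using assms delta_pos by simp
  show "continuous_on {a..b} (\<lambda>s. f (y s))"
  proof (rule continuous_on_compose2[OF f_cont])
    show "continuous_on {a..b} y"
      by (rule continuous_on_subset[OF y_cont_Icc[OF \<open>-\<delta> \<le> a\<close> assms(2)]]) (use assms in auto)
    show "y ` {a..b} \<subseteq> {0<..}"
      using assms \<open>-\<delta> \<le> a\<close> by (auto intro!: y_pos intro: ereal_le_less_trans_real)
  qed
qed

lemma memory_integrable:
  assumes "0 \<le> t" "ereal t < T" "t - \<delta> \<le> a" "b \<le> t"
  shows "(\<lambda>s. w (t - s) * f (y s)) integrable_on {a..b}"
  by (rule integrable_continuous_interval[OF memory_integrand_cont[OF assms]])

lemma memory_integrand_nonneg:
  assumes "0 \<le> t" "ereal t < T" "t - \<delta> \<le> s" "s \<le> t"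
  shows "0 \<le> w (t - s) * f (y s)"
proof -
  have "0 < y s" using assms delta_pos by (intro y_pos) (auto intro: ereal_le_less_trans_real)
  then show ?thesis using w_nonneg[of "t - s"] f_pos[of "y s"] assms by auto
qed

lemma memory_nonneg: "0 \<le> t \<Longrightarrow> ereal t < T \<Longrightarrow> 0 \<le> memory t"
  by (rule integral_nonneg[OF memory_integrable]) (auto intro: memory_integrand_nonneg)

lemma y_deriv_at:
  assumes "0 < t" "t < b" "ereal b \<le> T"
  shows "(y has_real_derivative memory t) (at t)"
proof -
  have "{0<..<b} \<subseteq> {t. 0 \<le> t \<and> ereal t < T}"
    using assms(3) by (auto intro: ereal_less_le_trans_real)
  then have "at t within {t. 0 \<le> t \<and> ereal t < T} = at t"
    by (rule at_within_open_subset[rotated 2]) (use assms in auto)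
  then show ?thesis using y_deriv[of t] assms ereal_less_le_trans_real by auto
qed

lemma y_mono:
  assumes "0 \<le> s" "s \<le> t" "ereal t < T"
  shows "y s \<le> y t"
proof (rule DERIV_nonneg_imp_increasing_open[OF assms(2)])
  obtain b where b: "t < b" "ereal b \<le> T" using ereal_less_obtain_real[OF assms(3)] .
  fix x assume x: "s < x" "x < t"
  then have "(y has_real_derivative memory x) (at x)" "0 \<le> memory x"
    using assms b y_deriv_at[of x b] memory_nonneg[of x] ereal_less_le_trans_real[of x b]
    by auto
  then show "\<exists>d. (y has_real_derivative d) (at x) \<and> 0 \<le> d" by blast
qed (rule y_cont_Icc, use assms delta_pos in auto)

lemma memory_lower_bound:
  assumes "0 \<le> s" "s \<le> t" "ereal t < T" "t - s \<le> d" "d \<le> \<delta>"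
    and "\<forall>r\<in>{0..d}. c \<le> w r" "0 \<le> c" "0 \<le> \<beta>" "\<forall>\<sigma>\<in>{s..t}. \<beta> \<le> f (y \<sigma>)"
  shows "c * \<beta> * (t - s) \<le> memory t"
proof -
  let ?g = "\<lambda>\<sigma>. w (t - \<sigma>) * f (y \<sigma>)"
  have "c * \<beta> * (t - s) = integral {s..t} (\<lambda>_. c * \<beta>)" using assms by simp
  also have "\<dots> \<le> integral {s..t} ?g"
    by (rule integral_le[OF _ memory_integrable]) (use assms w_nonneg in \<open>auto intro!: mult_mono\<close>)
  also have "\<dots> \<le> integral {t-\<delta>..s} ?g + integral {s..t} ?g"
    using integral_nonneg[OF memory_integrable, of t "t-\<delta>" s] memory_integrand_nonneg assms
    by auto
  also have "\<dots> = memory t"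
    by (rule Henstock_Kurzweil_Integration.integral_combine[OF _ _ memory_integrable])
       (use assms in auto)
  finally show ?thesis .
qed

lemma y_quadratic_growth:
  assumes "0 \<le> s" "ereal (s + \<tau>) < T" "0 \<le> \<tau>" "\<tau> \<le> d" "d \<le> \<delta>"
    and "\<forall>r\<in>{0..d}. c \<le> w r" "0 \<le> c" "0 \<le> \<beta>" "\<forall>\<sigma>\<in>{s..s+\<tau>}. \<beta> \<le> f (y \<sigma>)"
  shows "y s + c * \<beta> * \<tau>\<^sup>2 / 2 \<le> y (s + \<tau>)"
proof -
  let ?H = "\<lambda>t. y t - c * \<beta> * (t - s)\<^sup>2 / 2"
  have "?H s \<le> ?H (s + \<tau>)"
  proof (rule DERIV_nonneg_imp_increasing_open[of s "s+\<tau>" ?H])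
    fix x assume x: "s < x" "x < s + \<tau>"
    have xT: "ereal x < T" using x assms(2) by (meson ereal_le_less_trans_real less_imp_le)
    have dy: "(y has_real_derivative memory x) (at x)"
      by (rule y_deriv_at[of x "s+\<tau>"]) (use x assms in auto)
    have dq: "((\<lambda>t. c * \<beta> * (t - s)\<^sup>2 / 2) has_real_derivative c * \<beta> * (x - s)) (at x)"
      by (auto intro!: derivative_eq_intros simp: power2_eq_square field_simps)
    have "c * \<beta> * (x - s) \<le> memory x"
      by (rule memory_lower_bound[where d=d]) (use x assms xT in auto)
    then show "\<exists>d. (?H has_real_derivative d) (at x) \<and> 0 \<le> d"
      using DERIV_diff[OF dy dq] by (intro exI conjI) auto
  qed (use assms delta_pos in \<open>auto intro!: continuous_intros y_cont_Icc\<close>)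
  then show ?thesis by simp
qed

lemma y_integral_form:
  assumes "0 \<le> t" "ereal t < T"
  shows "y t = y 0 + integral {0..t} memory"
proof -
  have "(memory has_integral y t - y 0) {0..t}"
  proof (rule fundamental_theorem_of_calculus[OF assms(1)])
    fix x assume x: "x \<in> {0..t}"
    have xT: "ereal x < T" using x assms ereal_le_less_trans_real by auto
    have "(y has_real_derivative memory x) (at x within {0..t})"
      by (rule DERIV_subset[OF y_deriv]) (use x xT assms in \<open>auto intro: ereal_le_less_trans_real\<close>)
    then show "(y has_vector_derivative memory x) (at x within {0..t})"
      by (simp add: has_real_derivative_iff_has_vector_derivative)
  qed
  then show ?thesis by (simp add: integral_unique)
qed

end

section \<open>Solutions cannot be global\<close>

lemma doubling_times_bound:
  fixes y \<tau> h :: "real \<Rightarrow> real"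
  assumes "0 \<le> s0" "0 < M0" "M0 \<le> y s0"
    and double: "\<And>M s. M \<ge> M0 \<Longrightarrow> 0 \<le> s \<Longrightarrow> M \<le> y s \<Longrightarrow> 2 * M \<le> y (s + \<tau> M)"
    and \<tau>_le: "\<And>M. M \<ge> M0 \<Longrightarrow> 0 \<le> \<tau> M \<and> \<tau> M \<le> C * integral {M/2..M} h"
    and h_int: "\<And>p q. M0/2 \<le> p \<Longrightarrow> h integrable_on {p..q}"
  shows "\<exists>s. 0 \<le> s \<and> s \<le> s0 + C * integral {M0/2..2^n * M0 / 2} h \<and> 2^n * M0 \<le> y s"
proof (induction n)
  case 0
  show ?case using assms by (intro exI[of _ s0]) auto
next
  case (Suc n)
  then obtain s where s: "0 \<le> s" "s \<le> s0 + C * integral {M0/2..2^n * M0 / 2} h" "2^n * M0 \<le> y s"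
    by blast
  define M where "M = 2^n * M0"
  have M: "M \<ge> M0" using \<open>0 < M0\<close> by (simp add: M_def)
  have comb: "integral {M0/2..M/2} h + integral {M/2..M} h = integral {M0/2..M} h"
    by (rule Henstock_Kurzweil_Integration.integral_combine) (use M \<open>0 < M0\<close> in \<open>auto intro!: h_int\<close>)
  have "s + \<tau> M \<le> s0 + C * integral {M0/2..M/2} h + C * integral {M/2..M} h"
    using s(2) \<tau>_le[OF M] by (simp add: M_def)
  also have "\<dots> = s0 + C * integral {M0/2..M} h" using comb by (metis add.assoc distrib_left)
  finally have "s + \<tau> M \<le> s0 + C * integral {M0/2..M} h" .
  moreover have "2 * M \<le> y (s + \<tau> M)" using double[OF M s(1)] s(3) by (simp add: M_def)
  ultimately show ?case using s(1) \<tau>_le[OF M] by (intro exI[of _ "s + \<tau> M"]) (auto simp: M_def)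
qed

context delay_solution
begin

lemma global_y_unbounded:
  assumes "T = PInfty" "w 0 > 0"
  shows "\<exists>t\<ge>0. B < y t"
proof (rule ccontr)
  assume "\<not> (\<exists>t\<ge>0. B < y t)"
  then have y_le: "\<And>t. t \<ge> 0 \<Longrightarrow> y t \<le> B" by force
  obtain d c where dc: "0 < d" "d \<le> \<delta>" "0 < c" "\<forall>r\<in>{0..d}. c \<le> w r"
    using continuous_on_pos_near_0[OF w_cont \<open>w 0 > 0\<close> delta_pos] by blast
  have y0: "0 < y 0" using y_pos[of 0] delta_pos assms by auto
  have "continuous_on {y 0..B} f" by (rule continuous_on_subset[OF f_cont]) (use y0 in auto)
  then obtain x0 where x0: "x0 \<in> {y 0..B}" "\<And>x. x \<in> {y 0..B} \<Longrightarrow> f x0 \<le> f x"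
    using continuous_attains_inf[of "{y 0..B}" f] y_le[of 0] by auto
  have fx0: "0 < f x0" using x0(1) y0 f_pos by auto
  define k where "k = c * f x0 * d\<^sup>2 / 2"
  have "0 < k" unfolding k_def using dc fx0 by auto
  have y_lower: "y 0 + real n * k \<le> y (real n * d)" for n
  proof (induction n)
    case (Suc n)
    have "f x0 \<le> f (y \<sigma>)" if "\<sigma> \<in> {real n * d..real n * d + d}" for \<sigma>
    proof -
      have "0 \<le> \<sigma>" using that dc by (simp add: order_trans[of 0 "real n * d"])
      then show ?thesis using x0(2) y_mono[of 0 \<sigma>] y_le[of \<sigma>] assms(1) by simp
    qed
    then have "y (real n * d) + c * f x0 * d\<^sup>2 / 2 \<le> y (real n * d + d)"
      by (intro y_quadratic_growth[where d=d]) (use dc fx0 assms in auto)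
    moreover have "real (Suc n) * d = real n * d + d" "real (Suc n) * k = real n * k + k"
      by (simp_all add: algebra_simps)
    ultimately show ?case using Suc unfolding k_def[symmetric] by (simp only:)
  qed simp
  obtain n where "B - y 0 < real n * k" using ex_less_of_nat_mult[OF \<open>0 < k\<close>] by blast
  then show False using y_lower[of n] y_le[of "real n * d"] dc by simp
qed

lemma global_y_doubles:
  assumes "T = PInfty" "0 \<le> s" "0 < M" "M \<le> y s"
    and qm: "\<And>x x'. M1 \<le> x \<Longrightarrow> x \<le> x' \<Longrightarrow> f x \<le> 4 * f x'" and "M1 \<le> M"
    and "0 < c" "\<forall>r\<in>{0..d}. c \<le> w r" "d \<le> \<delta>" "sqrt (8 * M / (c * f M)) \<le> d"
  shows "2 * M \<le> y (s + sqrt (8 * M / (c * f M)))"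
proof -
  define \<tau> where "\<tau> = sqrt (8 * M / (c * f M))"
  have fM: "0 < f M" using f_pos \<open>0 < M\<close> by simp
  have \<tau>_sq: "\<tau>\<^sup>2 = 8 * M / (c * f M)" unfolding \<tau>_def using fM \<open>0 < c\<close> \<open>0 < M\<close> by simp
  have "\<forall>\<sigma>\<in>{s..s + \<tau>}. f M / 4 \<le> f (y \<sigma>)"
  proof
    fix \<sigma> assume "\<sigma> \<in> {s..s + \<tau>}"
    then have "M \<le> y \<sigma>" using y_mono[of s \<sigma>] assms by auto
    then show "f M / 4 \<le> f (y \<sigma>)" using qm[of M "y \<sigma>"] \<open>M1 \<le> M\<close> by simp
  qed
  then have "y s + c * (f M / 4) * \<tau>\<^sup>2 / 2 \<le> y (s + \<tau>)"
    by (intro y_quadratic_growth[where d=d]) (use assms fM in \<open>auto simp: \<tau>_def\<close>)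
  moreover have "c * (f M / 4) * \<tau>\<^sup>2 / 2 = M" unfolding \<tau>_sq using fM \<open>0 < c\<close> by simp
  ultimately show ?thesis using assms unfolding \<tau>_def by simp
qed

lemma global_y_doubling_in_bounded_time:
  assumes "T = PInfty" "w 0 > 0" and asy: "asymp_increasing f"
    and sup: "filterlim (\<lambda>x. f x / x) at_top at_top"
    and "\<eta> > 0" and f_int: "\<And>u. u \<ge> \<eta> \<Longrightarrow> f integrable_on {0..u}"
    and h_int: "(\<lambda>u. 1 / sqrt (integral {0..u} f)) integrable_on {\<eta>..}"
  obtains S M0 where "0 < M0" "\<And>n. \<exists>s\<in>{0..S}. 2^n * M0 \<le> y s"
proof -
  let ?h = "\<lambda>u. 1 / sqrt (integral {0..u} f)"
  obtain d c where dc: "0 < d" "d \<le> \<delta>" "0 < c" "\<forall>r\<in>{0..d}. c \<le> w r"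
    using continuous_on_pos_near_0[OF w_cont \<open>w 0 > 0\<close> delta_pos] by blast
  obtain M1 where M1: "M1 > 0" "\<And>x x'. M1 \<le> x \<Longrightarrow> x \<le> x' \<Longrightarrow> f x \<le> 4 * f x'"
    using asymp_increasing_quasi_mono[OF asy] by blast
  define C where "C = 2 * sqrt (40 / c)"
  define \<tau> where "\<tau> M = sqrt (8 * M / (c * f M))" for M
  have "eventually (\<lambda>M. \<tau> M \<le> d \<and> \<tau> M \<le> C * integral {M/2..M} ?h \<and> M \<ge> max M1 (2 * \<eta>)) at_top"
    using eventually_conj[OF
        eventually_growth_time_le[OF f_cont f_pos M1(2) sup \<open>\<eta> > 0\<close> f_int h_int \<open>0 < c\<close> \<open>0 < d\<close>]
        eventually_ge_at_top[of "max M1 (2 * \<eta>)"]]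
    unfolding \<tau>_def C_def by (simp add: conj_assoc)
  then obtain M0 where M0: "\<And>M. M \<ge> M0 \<Longrightarrow> \<tau> M \<le> d \<and> \<tau> M \<le> C * integral {M/2..M} ?h \<and> M \<ge> max M1 (2 * \<eta>)"
    unfolding eventually_at_top_linorder by blast
  have "M0 \<ge> max M1 (2 * \<eta>)" using M0 by blast
  then have "0 < M0" "M0/2 \<ge> \<eta>" using M1 \<open>\<eta> > 0\<close> by auto
  have \<tau>_nonneg: "0 \<le> \<tau> M" if "M \<ge> M0" for M
    using f_pos[of M] that \<open>0 < M0\<close> dc by (simp add: \<tau>_def)
  have h_nonneg: "0 \<le> ?h u" if "u \<ge> \<eta>" for u
    using integral_Icc_pos[OF f_cont f_pos, of u] f_int that \<open>\<eta> > 0\<close> by simp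
  obtain s0 where s0: "s0 \<ge> 0" "M0 < y s0" using global_y_unbounded[OF assms(1,2)] by blast
  have "\<exists>s\<in>{0..s0 + C * integral {\<eta>..} ?h}. 2^n * M0 \<le> y s" for n
  proof -
    obtain s where s: "0 \<le> s" "s \<le> s0 + C * integral {M0/2..2^n * M0 / 2} ?h" "2^n * M0 \<le> y s"
    proof (rule exE[OF doubling_times_bound[where \<tau>=\<tau> and C=C]])
      show "\<And>M s. M \<ge> M0 \<Longrightarrow> 0 \<le> s \<Longrightarrow> M \<le> y s \<Longrightarrow> 2 * M \<le> y (s + \<tau> M)"
        unfolding \<tau>_def using M0 M1 dc \<open>0 < M0\<close>
        by (intro global_y_doubles[OF assms(1)]) (auto simp: \<tau>_def)
      show "\<And>p q. M0/2 \<le> p \<Longrightarrow> ?h integrable_on {p..q}"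
        by (rule integrable_on_subinterval[OF h_int]) (use \<open>M0/2 \<ge> \<eta>\<close> in auto)
    qed (use s0 \<open>0 < M0\<close> M0 \<tau>_nonneg in auto)
    have "M0/2 \<le> 2^n * M0 / 2" using \<open>0 < M0\<close> by simp
    then have "integral {M0/2..2^n * M0 / 2} ?h \<le> integral {\<eta>..} ?h"
      using \<open>M0/2 \<ge> \<eta>\<close> h_nonneg
      by (intro integral_subset_le integrable_on_subinterval[OF h_int] h_int) auto
    then have "C * integral {M0/2..2^n * M0 / 2} ?h \<le> C * integral {\<eta>..} ?h"
      by (rule mult_left_mono) (use dc in \<open>simp add: C_def\<close>)
    then show ?thesis using s by auto
  qed
  then show ?thesis using that \<open>0 < M0\<close> by blast
qed

lemma no_global_solution:
  assumes "T = PInfty" "w 0 > 0" "asymp_increasing f" "filterlim (\<lambda>x. f x / x) at_top at_top"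
    and "\<eta> > 0" "\<And>u. u \<ge> \<eta> \<Longrightarrow> f integrable_on {0..u}"
    and "(\<lambda>u. 1 / sqrt (integral {0..u} f)) integrable_on {\<eta>..}"
  shows False
proof -
  obtain S M0 where "0 < M0" and reach: "\<And>n. \<exists>s\<in>{0..S}. 2^n * M0 \<le> y s"
    using global_y_doubling_in_bounded_time[OF assms] by blast
  have "{0..S} \<noteq> {}" using reach[of 0] by auto
  then obtain s1 where s1: "\<And>s. s \<in> {0..S} \<Longrightarrow> y s \<le> y s1"
    using continuous_attains_sup[OF compact_Icc _ y_cont_Icc[of 0 S]] delta_pos assms(1) by fastforce
  obtain n where "y s1 / M0 < 2^n" using real_arch_pow[of 2 "y s1 / M0"] by auto
  then have "y s1 < 2^n * M0" using \<open>0 < M0\<close> by (simp add: field_simps)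
  then show False using reach[of n] s1 by force
qed

end

section \<open>Local existence by Tonelli's scheme\<close>

locale delay_ivp =
  fixes \<delta> a E L W B K :: real and w fb yb :: "real \<Rightarrow> real"
  assumes delta_pos: "0 < \<delta>" and a_pos: "0 < a" and E_pos: "0 < E"
    and w_cont: "continuous_on {0..\<delta>} w" and w_nonneg: "\<And>r. r \<in> {0..\<delta>} \<Longrightarrow> 0 \<le> w r"
    and w_le: "\<And>r. r \<in> {0..\<delta>} \<Longrightarrow> w r \<le> W"
    and fb_cont: "continuous_on UNIV fb" and fb_nonneg: "\<And>x. 0 \<le> fb x" and fb_le: "\<And>x. fb x \<le> B"
    and fb_ucont: "\<And>e. 0 < e \<Longrightarrow> \<exists>d>0. \<forall>x x'. \<bar>x - x'\<bar> < d \<longrightarrow> \<bar>fb x - fb x'\<bar> < e"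
    and K_def: "K = W * \<delta> * B" and KE_le: "K * E \<le> 1"
    and yb_cont: "continuous_on {-\<delta>..a} yb" and yb_a: "yb a = L"
begin

definition memory :: "(real \<Rightarrow> real) \<Rightarrow> real \<Rightarrow> real" where
  "memory v \<tau> = integral {0..\<delta>} (\<lambda>r. w r * fb (v (\<tau> - r)))"

definition glue :: "(real \<Rightarrow> real) \<Rightarrow> real \<Rightarrow> real" where
  "glue g s = (if s \<le> a then yb s else g s)"

text \<open>Tonelli's scheme: the right-hand side only sees the approximation lagged by \<open>h\<close>,
  so it is determined step by step on intervals of length \<open>h\<close>.\<close>
definition lagged :: "real \<Rightarrow> (real \<Rightarrow> real) \<Rightarrow> real \<Rightarrow> real" where
  "lagged h u = glue (\<lambda>s. u (max a (s - h)))"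

definition tonelli_approx :: "real \<Rightarrow> (real \<Rightarrow> real) \<Rightarrow> bool" where
  "tonelli_approx h u \<longleftrightarrow> continuous_on {a..a+E} u \<and> u a = L \<and>
     (\<forall>t\<in>{a..a+E}. u t = L + integral {a..t} (memory (lagged h u)))"

lemma W_nonneg: "0 \<le> W" using w_nonneg[of 0] w_le[of 0] delta_pos by auto

lemma K_nonneg: "0 \<le> K"
  using W_nonneg fb_nonneg[of 0] fb_le[of 0] delta_pos K_def by simp

lemma memory_integrand_cont:
  assumes "continuous_on {\<tau>-\<delta>..\<tau>} v"
  shows "continuous_on {0..\<delta>} (\<lambda>r. w r * fb (v (\<tau> - r)))"
proof (intro continuous_on_mult w_cont)
  have "continuous_on {0..\<delta>} (\<lambda>r. v (\<tau> - r))"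
    by (rule continuous_on_compose2[OF assms]) (auto intro!: continuous_intros)
  then show "continuous_on {0..\<delta>} (\<lambda>r. fb (v (\<tau> - r)))"
    by (rule continuous_on_compose2[OF fb_cont]) auto
qed

lemma memory_integrable:
  "continuous_on {\<tau>-\<delta>..\<tau>} v \<Longrightarrow> (\<lambda>r. w r * fb (v (\<tau> - r))) integrable_on {0..\<delta>}"
  by (rule integrable_continuous_interval[OF memory_integrand_cont])

lemma memory_bounds:
  assumes "continuous_on {\<tau>-\<delta>..\<tau>} v"
  shows "0 \<le> memory v \<tau> \<and> memory v \<tau> \<le> K"
proof
  show "0 \<le> memory v \<tau>" unfolding memory_def
    by (rule integral_nonneg[OF memory_integrable[OF assms]]) (simp add: w_nonneg fb_nonneg)
  have "memory v \<tau> \<le> integral {0..\<delta>} (\<lambda>_. W * B)" unfolding memory_def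
    by (rule integral_le[OF memory_integrable[OF assms]])
       (use w_le w_nonneg fb_le fb_nonneg W_nonneg in \<open>auto intro: mult_mono\<close>)
  also have "\<dots> = K" using delta_pos K_def by simp
  finally show "memory v \<tau> \<le> K" .
qed

lemma abs_memory_diff_le:
  assumes "continuous_on {\<tau>-\<delta>..\<tau>} v" "continuous_on {\<tau>-\<delta>..\<tau>} v'"
    and "\<And>s. s \<in> {\<tau>-\<delta>..\<tau>} \<Longrightarrow> \<bar>fb (v s) - fb (v' s)\<bar> \<le> e"
  shows "\<bar>memory v \<tau> - memory v' \<tau>\<bar> \<le> W * e * \<delta>"
proof -
  have "\<bar>integral {0..\<delta>} (\<lambda>r. w r * fb (v (\<tau> - r))) - integral {0..\<delta>} (\<lambda>r. w r * fb (v' (\<tau> - r)))\<bar>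
      \<le> W * e * (\<delta> - 0)"
  proof (rule abs_integral_diff_le[OF memory_integrable[OF assms(1)] memory_integrable[OF assms(2)]])
    fix r assume r: "r \<in> {0..\<delta>}"
    have "\<bar>w r * fb (v (\<tau> - r)) - w r * fb (v' (\<tau> - r))\<bar> = w r * \<bar>fb (v (\<tau> - r)) - fb (v' (\<tau> - r))\<bar>"
      using w_nonneg[OF r] by (simp add: abs_mult right_diff_distrib[symmetric])
    also have "\<dots> \<le> W * e"
      by (rule mult_mono) (use r w_le w_nonneg W_nonneg assms(3)[of "\<tau> - r"] in auto)
    finally show "\<bar>w r * fb (v (\<tau> - r)) - w r * fb (v' (\<tau> - r))\<bar> \<le> W * e" .
  qed (use delta_pos in auto)
  then show ?thesis unfolding memory_def by simp
qed

lemma memory_cont: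
  assumes "continuous_on {p-\<delta>..q} v"
  shows "continuous_on {p..q} (memory v)"
  unfolding memory_def
  by (rule continuous_on_convolution_Icc[OF w_cont continuous_on_compose2[OF fb_cont assms]]) auto

lemma memory_local:
  "(\<And>s. s \<le> \<tau> \<Longrightarrow> v' s = v s) \<Longrightarrow> memory v' \<tau> = memory v \<tau>"
  unfolding memory_def
  by (rule Henstock_Kurzweil_Integration.integral_cong) (use delta_pos in auto)

lemma memory_eq_delay_integral:
  assumes "\<And>s. s \<in> {\<tau>-\<delta>..\<tau>} \<Longrightarrow> fb (v s) = f (v s)"
  shows "memory v \<tau> = integral {\<tau>-\<delta>..\<tau>} (\<lambda>s. w (\<tau> - s) * f (v s))"
proof -
  have "memory v \<tau> = integral {0..\<delta>} (\<lambda>r. w r * f (v (\<tau> - r)))"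
    unfolding memory_def using assms
    by (intro Henstock_Kurzweil_Integration.integral_cong) (auto simp: algebra_simps)
  also have "\<dots> = integral {\<tau>-\<delta>..\<tau>} (\<lambda>s. w (\<tau> - s) * f (v s))"
    using integral_reflect_shift_real[where \<phi> = "\<lambda>r. w r * f (v (\<tau> - r))" and t = \<tau>] by simp
  finally show ?thesis .
qed

lemma glue_cont:
  assumes "continuous_on {a..a+E} g" "g a = L"
  shows "continuous_on {-\<delta>..a+E} (glue g)"
  unfolding glue_def[abs_def]
proof (rule continuous_on_cases_1)
  have "{t \<in> {-\<delta>..a+E}. t \<le> a} = {-\<delta>..a}" using a_pos delta_pos E_pos by auto
  then show "continuous_on {t \<in> {-\<delta>..a+E}. t \<le> a} yb" using yb_cont by simp
  show "continuous_on {t \<in> {-\<delta>..a+E}. a \<le> t} g" by (rule continuous_on_subset[OF assms(1)]) auto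
qed (use assms yb_a in simp)

lemma memory_glue_cont:
  "continuous_on {a..a+E} g \<Longrightarrow> g a = L \<Longrightarrow> continuous_on {a..a+E} (memory (glue g))"
  by (rule memory_cont, rule continuous_on_subset[OF glue_cont]) (use a_pos in auto)

lemma lagged_cont:
  assumes "continuous_on {a..a+E} u" "u a = L" "0 < h"
  shows "continuous_on {-\<delta>..a+E} (lagged h u)"
  unfolding lagged_def
proof (rule glue_cont)
  have "continuous_on {a..a+E} (\<lambda>s. max a (s - h))" by (intro continuous_intros)
  then show "continuous_on {a..a+E} (\<lambda>s. u (max a (s - h)))"
    by (rule continuous_on_compose2[OF assms(1)]) (use E_pos assms(3) in auto)
qed (use assms in simp)

lemma memory_lagged_cont:
  "continuous_on {a..a+E} u \<Longrightarrow> u a = L \<Longrightarrow> 0 < h \<Longrightarrow> continuous_on {a..a+E} (memory (lagged h u))"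
  by (rule memory_cont, rule continuous_on_subset[OF lagged_cont]) (use a_pos in auto)

lemma lagged_local:
  assumes "\<And>x. x \<in> {a..c} \<Longrightarrow> u' x = u x" "s \<le> c + h" "a \<le> c"
  shows "lagged h u' s = lagged h u s"
  unfolding lagged_def glue_def using assms by (auto simp: max_def)

lemma tonelli_approx_upto:
  assumes "0 < h"
  shows "\<exists>u. continuous_on {a..a+E} u \<and> u a = L \<and>
     (\<forall>t\<in>{a..a+E}. t \<le> a + real k * h \<longrightarrow> u t = L + integral {a..t} (memory (lagged h u)))"
proof (induction k)
  case 0
  show ?case by (intro exI[of _ "\<lambda>_. L"]) auto
next
  case (Suc k)
  then obtain u where u: "continuous_on {a..a+E} u" "u a = L"
      "\<And>t. t \<in> {a..a+E} \<Longrightarrow> t \<le> a + real k * h \<Longrightarrow> u t = L + integral {a..t} (memory (lagged h u))"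
    by blast
  define c where "c = a + real k * h"
  have "a \<le> c" unfolding c_def using assms by simp
  define J where "J t = L + integral {a..t} (memory (lagged h u))" for t
  define u' where "u' t = (if t \<le> c then u t else J t)" for t
  have "continuous_on {a..a+E} J"
    unfolding J_def using memory_lagged_cont[OF u(1,2) assms]
    by (intro continuous_intros indefinite_integral_continuous_1 integrable_continuous_interval)
  then have u'_cont: "continuous_on {a..a+E} u'"
    unfolding u'_def using u(1) u(3)[of c]
    by (intro continuous_on_cases_1) (auto intro: continuous_on_subset simp: J_def c_def)
  have "memory (lagged h u') \<tau> = memory (lagged h u) \<tau>" if "\<tau> \<le> c + h" for \<tau>
    by (rule memory_local, rule lagged_local) (use that \<open>a \<le> c\<close> in \<open>auto simp: u'_def\<close>)
  then have "integral {a..t} (memory (lagged h u')) = integral {a..t} (memory (lagged h u))"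
    if "t \<le> c + h" for t
    using that by (intro Henstock_Kurzweil_Integration.integral_cong) auto
  moreover have "u' t = L + integral {a..t} (memory (lagged h u))"
    if "t \<in> {a..a+E}" "t \<le> c + h" for t
    using u(3)[OF that(1)] by (auto simp: u'_def J_def c_def)
  ultimately have "u' t = L + integral {a..t} (memory (lagged h u'))"
    if "t \<in> {a..a+E}" "t \<le> a + real (Suc k) * h" for t
    using that by (simp add: c_def algebra_simps)
  moreover have "u' a = L" using u(2) \<open>a \<le> c\<close> by (simp add: u'_def)
  ultimately show ?case using u'_cont by blast
qed

lemma tonelli_approx_exists: "0 < h \<Longrightarrow> \<exists>u. tonelli_approx h u"
proof -
  assume "0 < h"
  then obtain k where "E < real k * h" using ex_less_of_nat_mult by blast
  then show ?thesis
    using tonelli_approx_upto[OF \<open>0 < h\<close>, of k] unfolding tonelli_approx_def by auto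
qed

lemma tonelli_approx_increment:
  assumes u: "tonelli_approx h u" and "0 < h"
    and "t \<in> {a..a+E}" "t' \<in> {a..a+E}" "t \<le> t'"
  shows "0 \<le> u t' - u t \<and> u t' - u t \<le> K * (t' - t)"
proof -
  let ?m = "memory (lagged h u)"
  have m_cont: "continuous_on {a..a+E} ?m"
    using u \<open>0 < h\<close> unfolding tonelli_approx_def by (intro memory_lagged_cont) auto
  have m_bounds: "0 \<le> ?m \<tau> \<and> ?m \<tau> \<le> K" if "\<tau> \<in> {a..a+E}" for \<tau>
    using u \<open>0 < h\<close> that a_pos unfolding tonelli_approx_def
    by (intro memory_bounds continuous_on_subset[OF lagged_cont]) auto
  have m_int: "?m integrable_on {p..q}" if "a \<le> p" "q \<le> a+E" for p q
    by (rule integrable_continuous_interval, rule continuous_on_subset[OF m_cont]) (use that in auto)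
  have "integral {a..t} ?m + integral {t..t'} ?m = integral {a..t'} ?m"
    by (rule Henstock_Kurzweil_Integration.integral_combine, rule_tac [3] m_int) (use assms in auto)
  then have "u t' - u t = integral {t..t'} ?m"
    using u assms unfolding tonelli_approx_def by auto
  moreover have "0 \<le> integral {t..t'} ?m"
    by (rule integral_nonneg, rule m_int) (use assms m_bounds in auto)
  moreover have "integral {t..t'} ?m \<le> integral {t..t'} (\<lambda>_. K)"
    by (rule integral_le, rule m_int) (use assms m_bounds in auto)
  ultimately show ?thesis using assms by (simp add: mult.commute)
qed

lemma tonelli_approx_bounds:
  assumes "tonelli_approx h u" "0 < h" "t \<in> {a..a+E}"
  shows "L \<le> u t \<and> u t \<le> L + 1"
proof -
  have "K * (t - a) \<le> K * E" using assms K_nonneg by (intro mult_left_mono) auto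
  then show ?thesis
    using tonelli_approx_increment[OF assms(1,2), of a t] assms KE_le E_pos
    unfolding tonelli_approx_def by auto
qed

lemma tonelli_approx_lipschitz:
  assumes "tonelli_approx h u" "0 < h" "t \<in> {a..a+E}" "t' \<in> {a..a+E}"
  shows "\<bar>u t - u t'\<bar> \<le> K * \<bar>t - t'\<bar>"
  using tonelli_approx_increment[OF assms(1,2,3,4)] tonelli_approx_increment[OF assms(1,2,4,3)]
  by (cases "t \<le> t'") (auto simp: abs_if)

lemma tonelli_approx_subseq_limit:
  assumes U: "\<And>n. tonelli_approx (hs n) (U n)" and hs: "\<And>n. 0 < hs n"
  obtains g k where "continuous_on {a..a+E} g" "strict_mono (k :: nat \<Rightarrow> nat)"
    "\<forall>e>0. \<exists>N. \<forall>n\<ge>N. \<forall>x\<in>{a..a+E}. \<bar>U (k n) x - g x\<bar> < e"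
proof (rule Arzela_Ascoli[of "{a..a+E}" U "\<bar>L\<bar> + 1"])
  fix n x assume "x \<in> {a..a+E}"
  then have "L \<le> U n x \<and> U n x \<le> L + 1" by (rule tonelli_approx_bounds[OF U hs])
  then show "norm (U n x) \<le> \<bar>L\<bar> + 1" by auto
next
  fix x e assume x: "x \<in> {a..a+E}" and e: "0 < (e::real)"
  show "\<exists>d>0. \<forall>n y. y \<in> {a..a+E} \<and> norm (x - y) < d \<longrightarrow> norm (U n x - U n y) < e"
  proof (intro exI[of _ "e / (K + 1)"] conjI allI impI)
    fix n y assume y: "y \<in> {a..a+E} \<and> norm (x - y) < e / (K + 1)"
    have "\<bar>U n x - U n y\<bar> \<le> K * \<bar>x - y\<bar>" using tonelli_approx_lipschitz[OF U hs x] y by blast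
    also have "\<dots> \<le> K * (e / (K + 1))" using y K_nonneg by (intro mult_left_mono) auto
    also have "\<dots> < e" using e K_nonneg by (simp add: field_simps)
    finally show "norm (U n x - U n y) < e" by simp
  qed (use e K_nonneg in simp)
next
  fix g k assume "continuous_on {a..a+E} g" "strict_mono (k :: nat \<Rightarrow> nat)"
    "\<And>e. 0 < e \<Longrightarrow> \<exists>N. \<forall>n x. n \<ge> N \<and> x \<in> {a..a+E} \<longrightarrow> norm (U (k n) x - g x) < e"
  then show thesis using that by (metis real_norm_def)
qed simp

lemma fb_lagged_glue_close:
  assumes u: "tonelli_approx h u" "0 < h" and "s \<le> a + E"
    and close: "\<And>x. x \<in> {a..a+E} \<Longrightarrow> \<bar>u x - g x\<bar> < d/2" and "K * h < d/2"
    and fb_d: "\<And>x x'. \<bar>x - x'\<bar> < d \<Longrightarrow> \<bar>fb x - fb x'\<bar> < e" and "0 < e"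
  shows "\<bar>fb (lagged h u s) - fb (glue g s)\<bar> \<le> e"
proof (cases "s \<le> a")
  case True
  then show ?thesis using \<open>0 < e\<close> by (simp add: lagged_def glue_def)
next
  case False
  define m where "m = max a (s - h)"
  have "s \<in> {a..a+E}" "m \<in> {a..a+E}" using False assms(3) u(2) by (auto simp: m_def)
  moreover have "\<bar>m - s\<bar> \<le> h" using False u(2) by (auto simp: m_def)
  ultimately have "\<bar>u m - u s\<bar> \<le> K * h"
    using tonelli_approx_lipschitz[OF u] K_nonneg by (meson mult_left_mono order_trans)
  then have "\<bar>u m - g s\<bar> < d"
    using close[OF \<open>s \<in> {a..a+E}\<close>] \<open>K * h < d/2\<close> by linarith
  then show ?thesis using fb_d False by (fastforce simp: lagged_def glue_def m_def)
qed

lemma integral_memory_lagged_close: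
  assumes u: "tonelli_approx h u" "0 < h" and g: "continuous_on {a..a+E} g" "g a = L"
    and close: "\<And>x. x \<in> {a..a+E} \<Longrightarrow> \<bar>u x - g x\<bar> < d/2" and "K * h < d/2"
    and fb_d: "\<And>x x'. \<bar>x - x'\<bar> < d \<Longrightarrow> \<bar>fb x - fb x'\<bar> < e" and "0 < e"
    and t: "t \<in> {a..a+E}"
  shows "\<bar>integral {a..t} (memory (lagged h u)) - integral {a..t} (memory (glue g))\<bar> \<le> W * e * \<delta> * E"
proof -
  have u_cont: "continuous_on {a..a+E} u" "u a = L" using u unfolding tonelli_approx_def by auto
  have "\<bar>memory (lagged h u) \<tau> - memory (glue g) \<tau>\<bar> \<le> W * e * \<delta>" if "\<tau> \<in> {a..t}" for \<tau>
    using that t a_pos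
    by (intro abs_memory_diff_le continuous_on_subset[OF lagged_cont[OF u_cont u(2)]]
        continuous_on_subset[OF glue_cont[OF g]] fb_lagged_glue_close[OF u _ close] assms) auto
  then have "\<bar>integral {a..t} (memory (lagged h u)) - integral {a..t} (memory (glue g))\<bar>
      \<le> W * e * \<delta> * (t - a)"
    using t by (intro abs_integral_diff_le integrable_continuous_interval
        continuous_on_subset[OF memory_lagged_cont[OF u_cont u(2)]]
        continuous_on_subset[OF memory_glue_cont[OF g]]) auto
  also have "\<dots> \<le> W * e * \<delta> * E"
    using t W_nonneg delta_pos \<open>0 < e\<close> by (intro mult_left_mono) auto
  finally show ?thesis .
qed

lemma tonelli_limit_solves:
  assumes U: "\<And>n. tonelli_approx (1 / (real n + 1)) (U n)"
    and g: "continuous_on {a..a+E} g" "g a = L" and k: "strict_mono (k :: nat \<Rightarrow> nat)"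
    and unif: "\<forall>e>0. \<exists>N. \<forall>n\<ge>N. \<forall>x\<in>{a..a+E}. \<bar>U (k n) x - g x\<bar> < e"
    and t: "t \<in> {a..a+E}"
  shows "g t = L + integral {a..t} (memory (glue g))"
proof -
  have "g t - L - integral {a..t} (memory (glue g)) = 0"
  proof (rule eq_0_if_abs_le_mult_eps[of "1 + W * \<delta> * E"])
    show "0 \<le> 1 + W * \<delta> * E" using E_pos W_nonneg delta_pos by simp
    fix e :: real assume "0 < e"
    obtain d where d: "d > 0" "\<And>x x'. \<bar>x - x'\<bar> < d \<Longrightarrow> \<bar>fb x - fb x'\<bar> < e"
      using fb_ucont[OF \<open>0 < e\<close>] by blast
    obtain N1 where N1: "\<And>n x. n \<ge> N1 \<Longrightarrow> x \<in> {a..a+E} \<Longrightarrow> \<bar>U (k n) x - g x\<bar> < min e (d/2)"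
      using unif \<open>0 < e\<close> d by (meson half_gt_zero min_less_iff_conj)
    obtain N2 where N2: "K < real N2 * (d/2)" using ex_less_of_nat_mult[of "d/2" K] d by auto
    define n where "n = k (max N1 N2)"
    have "max N1 N2 \<le> n" unfolding n_def using seq_suble[OF k] by simp
    then have "K < (real n + 1) * (d/2)"
      using N2 d mult_right_mono[of "real N2" "real n + 1" "d/2"] by linarith
    then have Kh: "K * (1 / (real n + 1)) < d/2" by (simp add: field_simps)
    have close: "\<bar>U n x - g x\<bar> < min e (d/2)" if "x \<in> {a..a+E}" for x
      using N1 that unfolding n_def by auto
    have "\<bar>integral {a..t} (memory (lagged (1 / (real n + 1)) (U n))) - integral {a..t} (memory (glue g))\<bar>
        \<le> W * e * \<delta> * E"
      using close by (intro integral_memory_lagged_close[OF U _ g _ Kh d(2) \<open>0 < e\<close> t]) auto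
    moreover have "U n t = L + integral {a..t} (memory (lagged (1 / (real n + 1)) (U n)))"
      using U t unfolding tonelli_approx_def by blast
    moreover have "\<bar>U n t - g t\<bar> < e" using close[OF t] by simp
    ultimately show "\<bar>g t - L - integral {a..t} (memory (glue g))\<bar> \<le> (1 + W * \<delta> * E) * e"
      by (simp add: algebra_simps abs_if split: if_splits)
  qed
  then show ?thesis by simp
qed

lemma tonelli_fixed_point:
  obtains g where "continuous_on {a..a+E} g" "g a = L" "\<forall>t\<in>{a..a+E}. L \<le> g t \<and> g t \<le> L + 1"
    "\<forall>t\<in>{a..a+E}. g t = L + integral {a..t} (memory (glue g))"
proof -
  have hs: "0 < 1 / (real n + 1)" for n by simp
  have "\<forall>n. \<exists>u. tonelli_approx (1 / (real n + 1)) u" using tonelli_approx_exists hs by blast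
  from choice[OF this] obtain U where U: "\<And>n. tonelli_approx (1 / (real n + 1)) (U n)" by blast
  obtain g k where g: "continuous_on {a..a+E} g" "strict_mono (k :: nat \<Rightarrow> nat)"
    and unif: "\<forall>e>0. \<exists>N. \<forall>n\<ge>N. \<forall>x\<in>{a..a+E}. \<bar>U (k n) x - g x\<bar> < e"
    by (rule tonelli_approx_subseq_limit[of "\<lambda>n. 1 / (real n + 1)" U, OF U hs])
  have lim: "(\<lambda>n. U (k n) x) \<longlonglongrightarrow> g x" if "x \<in> {a..a+E}" for x
    unfolding lim_sequentially dist_real_def
  proof (intro allI impI)
    fix e :: real assume "0 < e"
    then show "\<exists>N. \<forall>n\<ge>N. \<bar>U (k n) x - g x\<bar> < e" using unif that by blast
  qed
  have U_a: "U n a = L" for n using U unfolding tonelli_approx_def by blast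
  have "(\<lambda>n. U (k n) a) \<longlonglongrightarrow> L" by (simp add: U_a)
  moreover have "(\<lambda>n. U (k n) a) \<longlonglongrightarrow> g a" using lim E_pos by simp
  ultimately have g_a: "g a = L" using LIMSEQ_unique by metis
  have g_bounds: "L \<le> g t \<and> g t \<le> L + 1" if t: "t \<in> {a..a+E}" for t
    using tonelli_approx_bounds[OF U hs t]
    by (auto intro: tendsto_lowerbound[OF lim[OF t]] tendsto_upperbound[OF lim[OF t]])
  show ?thesis
    using g_bounds tonelli_limit_solves[OF U g(1) g_a g(2) unif] by (intro that[OF g(1) g_a]) auto
qed

lemma fixed_point_solves_delay_equation:
  assumes fb_eq: "\<And>s. s \<in> {-\<delta>..a+E} \<Longrightarrow> fb (glue g s) = f (glue g s)"
    and fixed: "\<forall>t\<in>{a..a+E}. g t = L + integral {a..t} (memory (glue g))" and t: "t \<in> {a..a+E}"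
  shows "g t = L + integral {a..t} (\<lambda>\<tau>. integral {\<tau>-\<delta>..\<tau>} (\<lambda>s. w (\<tau> - s) * f (glue g s)))"
proof -
  have "memory (glue g) \<tau> = integral {\<tau>-\<delta>..\<tau>} (\<lambda>s. w (\<tau> - s) * f (glue g s))" if "\<tau> \<in> {a..t}" for \<tau>
    using that t a_pos by (intro memory_eq_delay_integral fb_eq) auto
  then have "integral {a..t} (memory (glue g)) =
      integral {a..t} (\<lambda>\<tau>. integral {\<tau>-\<delta>..\<tau>} (\<lambda>s. w (\<tau> - s) * f (glue g s)))"
    by (rule Henstock_Kurzweil_Integration.integral_cong)
  then show ?thesis using fixed t by simp
qed

end

text \<open>Peano-type local existence: truncating \<open>f\<close> outside \<open>[m, U]\<close> makes it bounded and
  uniformly continuous, and on a short enough interval the fixed point of Tonelli's scheme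
  stays in \<open>[m, U]\<close>, where the truncation is invisible.\<close>
lemma delay_local_existence:
  fixes \<delta> a m U :: real and w f \<theta> :: "real \<Rightarrow> real"
  assumes "0 < \<delta>" "0 < a" and f_cont: "continuous_on {0<..} f" and f_pos: "\<And>x. x > 0 \<Longrightarrow> f x > 0"
    and w_cont: "continuous_on {0..} w" and w_nonneg: "\<And>x. x \<ge> 0 \<Longrightarrow> w x \<ge> 0"
    and \<theta>_cont: "continuous_on {-\<delta>..a} \<theta>" and \<theta>_range: "\<And>s. s \<in> {-\<delta>..a} \<Longrightarrow> m \<le> \<theta> s \<and> \<theta> s \<le> U"
    and "0 < m" "\<theta> a + 1 \<le> U"
  obtains E g where "0 < E" "continuous_on {a..a+E} g" "g a = \<theta> a"
    "\<And>t. t \<in> {a..a+E} \<Longrightarrow> \<theta> a \<le> g t \<and> g t \<le> \<theta> a + 1"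
    "\<And>t. t \<in> {a..a+E} \<Longrightarrow> g t = \<theta> a +
       integral {a..t} (\<lambda>\<tau>. integral {\<tau>-\<delta>..\<tau>} (\<lambda>s. w (\<tau> - s) * f (if s \<le> a then \<theta> s else g s)))"
proof -
  define fb where "fb x = f (min (max x m) U)" for x
  have "m \<le> U" using \<theta>_range[of a] \<open>0 < \<delta>\<close> \<open>0 < a\<close> by auto
  have clamp: "min (max x m) U \<in> {m..U}" for x using \<open>m \<le> U\<close> by auto
  have f_mU: "continuous_on {m..U} f" by (rule continuous_on_subset[OF f_cont]) (use \<open>0 < m\<close> in auto)
  obtain xB where xB: "xB \<in> {m..U}" "\<And>x. x \<in> {m..U} \<Longrightarrow> f x \<le> f xB"
    using continuous_attains_sup[OF compact_Icc _ f_mU] \<open>m \<le> U\<close> by auto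
  have w_0\<delta>: "continuous_on {0..\<delta>} w" by (rule continuous_on_subset[OF w_cont]) auto
  obtain xW where xW: "xW \<in> {0..\<delta>}" "\<And>x. x \<in> {0..\<delta>} \<Longrightarrow> w x \<le> w xW"
    using continuous_attains_sup[OF compact_Icc _ w_0\<delta>] \<open>0 < \<delta>\<close> by auto
  define K where "K = w xW * \<delta> * f xB"
  have "0 \<le> K"
    unfolding K_def using w_nonneg[of xW] xW(1) f_pos[of xB] xB(1) \<open>0 < m\<close> \<open>0 < \<delta>\<close> by simp
  define E where "E = 1 / (K + 1)"
  have "0 < E" "K * E \<le> 1" unfolding E_def using \<open>0 \<le> K\<close> by (auto simp: field_simps)
  interpret ivp: delay_ivp \<delta> a E "\<theta> a" "w xW" "f xB" K w fb \<theta>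
  proof
    show "continuous_on UNIV fb" unfolding fb_def
      by (rule continuous_on_compose2[OF f_mU]) (use \<open>m \<le> U\<close> in \<open>auto intro!: continuous_intros\<close>)
    show "\<And>x. 0 \<le> fb x" unfolding fb_def using \<open>0 < m\<close> \<open>m \<le> U\<close> by (intro less_imp_le f_pos) auto
    show "\<And>x. fb x \<le> f xB" unfolding fb_def using xB(2) clamp by blast
    show "\<And>e. 0 < e \<Longrightarrow> \<exists>d>0. \<forall>x x'. \<bar>x - x'\<bar> < d \<longrightarrow> \<bar>fb x - fb x'\<bar> < e"
      unfolding fb_def by (rule clamp_uniformly_continuous[OF f_mU \<open>m \<le> U\<close>])
  qed (use assms \<open>0 < E\<close> \<open>K * E \<le> 1\<close> w_0\<delta> xW in \<open>auto simp: K_def\<close>)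
  obtain g where g: "continuous_on {a..a+E} g" "g a = \<theta> a" "\<forall>t\<in>{a..a+E}. \<theta> a \<le> g t \<and> g t \<le> \<theta> a + 1"
    "\<forall>t\<in>{a..a+E}. g t = \<theta> a + integral {a..t} (ivp.memory (ivp.glue g))"
    using ivp.tonelli_fixed_point by blast
  have "ivp.glue g s \<in> {m..U}" if "s \<in> {-\<delta>..a+E}" for s
  proof (cases "s \<le> a")
    case True
    then show ?thesis using that \<theta>_range by (simp add: ivp.glue_def)
  next
    case False
    then have "\<theta> a \<le> g s \<and> g s \<le> \<theta> a + 1" using that g(3) by auto
    then show ?thesis using False \<theta>_range[of a] assms(1,2) \<open>\<theta> a + 1 \<le> U\<close> by (simp add: ivp.glue_def)
  qed
  then have "fb (ivp.glue g s) = f (ivp.glue g s)" if "s \<in> {-\<delta>..a+E}" for s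
    using that by (simp add: fb_def)
  then show ?thesis
    using ivp.fixed_point_solves_delay_equation[OF _ g(4)] g(3)
    by (intro that[OF \<open>0 < E\<close> g(1,2)]) (auto simp: ivp.glue_def[abs_def])
qed

section \<open>Continuation of bounded solutions\<close>

context delay_solution
begin

lemma bounded_y_limit:
  assumes T: "T = ereal a" and y_le: "\<And>t. 0 \<le> t \<Longrightarrow> t < a \<Longrightarrow> y t \<le> B"
  obtains L m U where "0 < m" "m \<le> L" "L + 1 \<le> U" "(y \<longlongrightarrow> L) (at_left a)"
    "\<And>s. s \<in> {-\<delta>..<a} \<Longrightarrow> m \<le> y s \<and> y s \<le> U"
proof -
  have "0 < a" using T_pos T by simp
  have bdd: "bdd_above (y ` {0..<a})" using y_le by (intro bdd_aboveI[of _ B]) auto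
  define L where "L = (SUP t\<in>{0..<a}. y t)"
  have lim: "(y \<longlongrightarrow> L) (at_left a)"
    unfolding L_def by (rule mono_tendsto_SUP_at_left[OF \<open>0 < a\<close> _ bdd]) (use y_mono T in simp)
  have y_le_L: "y t \<le> L" if "0 \<le> t" "t < a" for t
    unfolding L_def by (rule cSUP_upper[OF _ bdd]) (use that in auto)
  have y_cont0: "continuous_on {-\<delta>..0} y" by (rule y_cont_Icc) (use T \<open>0 < a\<close> in auto)
  obtain xm where xm: "xm \<in> {-\<delta>..0}" "\<And>x. x \<in> {-\<delta>..0} \<Longrightarrow> y xm \<le> y x"
    using continuous_attains_inf[OF compact_Icc _ y_cont0] delta_pos by auto
  obtain xM where xM: "\<And>x. x \<in> {-\<delta>..0} \<Longrightarrow> y x \<le> y xM"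
    using continuous_attains_sup[OF compact_Icc _ y_cont0] delta_pos by fastforce
  have "0 < y xm" using xm(1) T \<open>0 < a\<close> by (intro y_pos) auto
  have "y xm \<le> y 0" "y 0 \<le> L" using xm(2)[of 0] y_le_L[of 0] delta_pos \<open>0 < a\<close> by auto
  have "y xm \<le> y s \<and> y s \<le> max (y xM) L + 1" if "s \<in> {-\<delta>..<a}" for s
  proof (cases "s \<le> 0")
    case True
    then show ?thesis using that xm(2) xM by fastforce
  next
    case False
    then show ?thesis
      using that y_mono[of 0 s] y_le_L[of s] T \<open>y xm \<le> y 0\<close> by auto
  qed
  then show ?thesis
    using that[of "y xm" L "max (y xM) L + 1"] \<open>0 < y xm\<close> \<open>y xm \<le> y 0\<close> \<open>y 0 \<le> L\<close> lim by auto
qed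

lemma unbounded_y_blows_up:
  assumes T: "T = ereal a" and unbounded: "\<And>B. \<exists>t. 0 \<le> t \<and> t < a \<and> B < y t"
  shows "filterlim (\<lambda>t. \<bar>y t\<bar>) at_top (at_left a)"
  unfolding filterlim_at_top
proof
  fix B
  obtain t0 where t0: "0 \<le> t0" "t0 < a" "B < y t0" using unbounded by blast
  show "eventually (\<lambda>t. B \<le> \<bar>y t\<bar>) (at_left a)"
    using eventually_at_left_real[OF t0(2)]
  proof (rule eventually_mono)
    fix t assume "t \<in> {t0<..<a}"
    then have "y t0 \<le> y t" using y_mono[of t0 t] t0 T by auto
    then show "B \<le> \<bar>y t\<bar>" using t0 by simp
  qed
qed

lemma continuation_is_solution:
  assumes T: "T = ereal a" and "0 < m" and y_lim: "(y \<longlongrightarrow> L) (at_left a)"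
    and \<theta>_def: "\<And>t. \<theta> t = (if t < a then y t else L)"
    and \<theta>_cont: "continuous_on {-\<delta>..a} \<theta>" and \<theta>_ge: "\<And>s. s \<in> {-\<delta>..a} \<Longrightarrow> m \<le> \<theta> s"
    and "0 < E" and g_cont: "continuous_on {a..a+E} g" and "g a = L"
    and g_ge: "\<And>t. t \<in> {a..a+E} \<Longrightarrow> m \<le> g t"
    and g_eq: "\<And>t. t \<in> {a..a+E} \<Longrightarrow> g t = L +
       integral {a..t} (\<lambda>\<tau>. integral {\<tau>-\<delta>..\<tau>} (\<lambda>s. w (\<tau> - s) * f (if s \<le> a then \<theta> s else g s)))"
  defines "Z \<equiv> \<lambda>s. if s \<le> a then \<theta> s else g s"
  shows "is_solution \<delta> w f \<psi> (ereal (a + E)) Z"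
proof -
  define P where "P \<tau> = integral {\<tau>-\<delta>..\<tau>} (\<lambda>s. w (\<tau> - s) * f (Z s))" for \<tau>
  have "0 < a" using T_pos T by simp
  have Z_y: "Z s = y s" if "s < a" for s using that by (simp add: Z_def \<theta>_def)
  have Z_cont: "continuous_on {-\<delta>..a+E} Z"
    unfolding Z_def
    by (rule continuous_on_cases_1) (use \<theta>_cont g_cont \<open>g a = L\<close> \<theta>_def \<open>0 < E\<close> in
        \<open>auto intro: continuous_on_subset\<close>)
  have Z_ge: "m \<le> Z s" if "s \<in> {-\<delta>..a+E}" for s
    using that \<theta>_ge g_ge by (cases "s \<le> a") (auto simp: Z_def)
  then have "Z ` {-\<delta>..a+E} \<subseteq> {0<..}" using \<open>0 < m\<close> by force
  then have "continuous_on {0-\<delta>..a+E} (\<lambda>s. f (Z s))"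
    using continuous_on_compose2[OF f_cont Z_cont] by simp
  then have P_cont: "continuous_on {0..a+E} P"
    unfolding P_def by (intro continuous_on_delay_integral continuous_on_subset[OF w_cont]) auto
  have y_eq: "y t = y 0 + integral {0..t} P" if "0 \<le> t" "t < a" for t
  proof -
    have "memory x = P x" if "x \<in> {0..t}" for x
      unfolding P_def using that \<open>t < a\<close>
      by (intro Henstock_Kurzweil_Integration.integral_cong) (auto simp: Z_y)
    then have "integral {0..t} memory = integral {0..t} P"
      by (rule Henstock_Kurzweil_Integration.integral_cong)
    then show ?thesis using y_integral_form[of t] that T by simp
  qed
  have Z_eq: "Z t = Z 0 + integral {0..t} P" if t: "t \<in> {0..a+E}" for t
  proof (cases "t < a")
    case True
    then show ?thesis using y_eq[of t] t Z_y[of t] Z_y[of 0] \<open>0 < a\<close> by simp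
  next
    case False
    have "P = (\<lambda>\<tau>. integral {\<tau>-\<delta>..\<tau>} (\<lambda>s. w (\<tau> - s) * f (if s \<le> a then \<theta> s else g s)))"
      by (simp add: P_def Z_def fun_eq_iff)
    then have "g t = y 0 + integral {0..t} P"
      using integral_equation_continue[OF P_cont \<open>0 < a\<close> _ y_eq y_lim] g_eq t False \<open>0 < E\<close> by auto
    then show ?thesis using False Z_y[of 0] \<open>0 < a\<close> \<open>g a = L\<close> \<theta>_def by (auto simp: Z_def)
  qed
  show ?thesis
  proof (rule is_solution_of_integral_equation[OF _ Z_cont _ _ P_cont _ Z_eq])
    show "\<And>t. t \<in> {-\<delta>..0} \<Longrightarrow> Z t = \<psi> t" using Z_y y_initial \<open>0 < a\<close> by auto
    show "\<And>t. t \<in> {-\<delta>..a+E} \<Longrightarrow> 0 < Z t" using Z_ge \<open>0 < m\<close> by force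
  qed (use \<open>0 < a\<close> \<open>0 < E\<close> in \<open>auto simp: P_def\<close>)
qed

lemma bounded_y_extends:
  assumes T: "T = ereal a" and y_le: "\<And>t. 0 \<le> t \<Longrightarrow> t < a \<Longrightarrow> y t \<le> B"
  shows "\<exists>T' z. T < T' \<and> is_solution \<delta> w f \<psi> T' z \<and> (\<forall>t. -\<delta> \<le> t \<and> ereal t < T \<longrightarrow> z t = y t)"
proof -
  have "0 < a" using T_pos T by simp
  obtain L m U where LmU: "0 < m" "m \<le> L" "L + 1 \<le> U" "(y \<longlongrightarrow> L) (at_left a)"
    "\<And>s. s \<in> {-\<delta>..<a} \<Longrightarrow> m \<le> y s \<and> y s \<le> U"
    using bounded_y_limit[OF assms] by blast
  define \<theta> where "\<theta> t = (if t < a then y t else L)" for t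
  have "{t. -\<delta> \<le> t \<and> ereal t < T} = {-\<delta>..<a}" using T by auto
  then have "continuous_on {-\<delta>..<a} y" using y_cont by simp
  then have \<theta>_cont: "continuous_on {-\<delta>..a} \<theta>"
    unfolding \<theta>_def using LmU(4) delta_pos \<open>0 < a\<close> by (intro continuous_on_extend_at_left) auto
  have \<theta>_range: "m \<le> \<theta> s \<and> \<theta> s \<le> U" if "s \<in> {-\<delta>..a}" for s
    using that LmU by (auto simp: \<theta>_def)
  have "\<theta> a = L" by (simp add: \<theta>_def)
  obtain E g where "0 < E" and g: "continuous_on {a..a+E} g" "g a = L"
    "\<And>t. t \<in> {a..a+E} \<Longrightarrow> L \<le> g t \<and> g t \<le> L + 1"
    "\<And>t. t \<in> {a..a+E} \<Longrightarrow> g t = L +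
       integral {a..t} (\<lambda>\<tau>. integral {\<tau>-\<delta>..\<tau>} (\<lambda>s. w (\<tau> - s) * f (if s \<le> a then \<theta> s else g s)))"
    using delay_local_existence[OF delta_pos \<open>0 < a\<close> f_cont f_pos w_cont w_nonneg \<theta>_cont \<theta>_range
        \<open>0 < m\<close>] LmU(3) unfolding \<open>\<theta> a = L\<close> by blast
  have "is_solution \<delta> w f \<psi> (ereal (a + E)) (\<lambda>s. if s \<le> a then \<theta> s else g s)"
    using g(3) \<theta>_range LmU(2) order_trans
    by (intro continuation_is_solution[OF T \<open>0 < m\<close> LmU(4) \<theta>_def \<theta>_cont _ \<open>0 < E\<close> g(1,2) _ g(4)])
       blast+
  then show ?thesis using T \<open>0 < E\<close> by (intro exI[of _ "ereal (a + E)"]) (auto simp: \<theta>_def)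
qed

end

theorem lemma6p3:
  fixes \<delta> :: real and f w \<psi> y :: "real \<Rightarrow> real" and T :: ereal
  assumes "\<delta> > 0"
    and "continuous_on {0<..} f" and "\<forall>x>0. f x > 0"
    and "asymp_increasing f"
    and "filterlim (\<lambda>x. f x / x) at_top at_top"
    and "continuous_on {0..} w" and "\<forall>x\<ge>0. w x \<ge> 0" and "w 0 > 0"
    and "continuous_on {-\<delta>..0} \<psi>" and "\<forall>t\<in>{-\<delta>..0}. \<psi> t > 0"
    and "\<exists>\<eta>>0. (\<forall>u\<ge>\<eta>. f integrable_on {0..u}) \<and>
              (\<lambda>u. 1 / sqrt (integral {0..u} f)) integrable_on {\<eta>..}"
    and "is_maximal_solution \<delta> w f \<psi> T y"
  shows "\<exists>T0::real. T = ereal T0 \<and> filterlim (\<lambda>t. \<bar>y t\<bar>) at_top (at_left T0)"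
proof -
  have sol: "is_solution \<delta> w f \<psi> T y"
    and maximal: "\<not> (\<exists>T' z. T < T' \<and> is_solution \<delta> w f \<psi> T' z \<and>
        (\<forall>t. -\<delta> \<le> t \<and> ereal t < T \<longrightarrow> z t = y t))"
    using assms(12) unfolding is_maximal_solution_def by auto
  interpret delay_solution \<delta> w f \<psi> y T
    using assms(1,2,3,6,7) sol by unfold_locales auto
  obtain \<eta> where \<eta>: "\<eta> > 0" "\<And>u. u \<ge> \<eta> \<Longrightarrow> f integrable_on {0..u}"
      "(\<lambda>u. 1 / sqrt (integral {0..u} f)) integrable_on {\<eta>..}"
    using assms(11) by blast
  show ?thesis
  proof (cases T)
    case (real a)
    have "\<exists>t. 0 \<le> t \<and> t < a \<and> B < y t" for B
      using bounded_y_extends[OF real, of B] maximal by (meson not_le)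
    then show ?thesis using unbounded_y_blows_up[OF real] real by blast
  next
    case PInf
    then show ?thesis using no_global_solution[OF _ assms(8,4,5) \<eta>] by simp
  next
    case MInf
    then show ?thesis using T_pos by simp
  qed
qed

end
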